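(* Fix any strategy $\mathcal{G}$ for the partial feedback game, let $\pi\sim\mathcal{S}_{m,n}$ be uniform, and let $H_{t-1}$ be the (random) history up to time $t-1$. For any history $h_{t-1}$ up to time $t-1$ (occurring with positive probability) and any $i\in[n]$, \[\Pr[\pi_t = i \mid H_{t-1} = h_{t-1}]\le \frac{m_i(h_{t-1})}{mn-a_i(h_{t-1}) - Y(h_{t-1})}.\]
   Context: $\mathcal{S}_{m,n}$ is the set of words over $[n]$ in which each symbol appears exactly $m$ times (a deck of $mn$ cards), and $\pi\sim\mathcal{S}_{m,n}$ is uniform. In the partial feedback game the guesser makes guesses $g_1,\dots,g_{mn}\in[n]$ sequentially; after guess $g_t$ they learn only $y_t\in\{0,1\}$, where $y_t=1$ iff $\pi_t=g_t$. A strategy chooses $g_t$ as a function of $(g_1,\dots,g_{t-1},y_1,\dots,y_{t-1})$. A history up to time $s$ is $h_s=((g_1,\dots,g_s),(y_1,\dots,y_s))$; $H_s$ denotes the random history produced by the strategy on $\pi$. For a history $h_s$: $Y(h_s)=\sum_{r\le s} y_r$ is the number of correct guesses, $a_i(h_s)=|\{r\le s: g_r=i\}|$ is the number of times $i$ has been guessed, and $m_i(h_s)=m-|\{r\le s: g_r=i,\ y_r=1\}|$.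
   Formalization: The history $h_{t-1}$ also satisfies $a_i(h_{t-1}) + Y(h_{t-1}) < mn$, so the denominator $mn-a_i(h_{t-1}) - Y(h_{t-1})$ is positive. The statement above fails without it. *)

theory Defs
  imports "HOL-Probability.Probability"
begin

definition decks :: "nat \<Rightarrow> nat \<Rightarrow> nat list set" where
  "decks m n = {w. length w = m * n \<and> set w \<subseteq> {1..n} \<and> (\<forall>i\<in>{1..n}. count_list w i = m)}"

type_synonym history = "nat list \<times> bool list"
type_synonym strategy = "history \<Rightarrow> nat"

text \<open>History up to time s produced by strategy G on deck w (w ! r is the card at time r+1).\<close>
fun hist :: "strategy \<Rightarrow> nat list \<Rightarrow> nat \<Rightarrow> history" where
  "hist G w 0 = ([], [])"
| "hist G w (Suc s) =
     (let (gs, ys) = hist G w s; g = G (gs, ys) in (gs @ [g], ys @ [w ! s = g]))"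

definition Ycorrect :: "history \<Rightarrow> nat" where
  "Ycorrect h = length (filter id (snd h))"

definition aguessed :: "history \<Rightarrow> nat \<Rightarrow> nat" where
  "aguessed h i = count_list (fst h) i"

definition mleft :: "nat \<Rightarrow> history \<Rightarrow> nat \<Rightarrow> nat" where
  "mleft m h i = m - card {r. r < length (fst h) \<and> fst h ! r = i \<and> snd h ! r}"

definition deck_pmf :: "nat \<Rightarrow> nat \<Rightarrow> nat list pmf" where
  "deck_pmf m n = pmf_of_set (decks m n)"

end

theory Submission
  imports Defs
begin

(*
  Call a position r open for i if the history neither revealed its card (a correct guess) nor
  ruled out i there (a wrong guess of i). Swapping the cards at positions t and r maps the decks
  consistent with h that have i at t injectively to consistent decks that have i at r, so
  Pr[pi_t = i | h] <= Pr[pi_r = i | h] for each of the at least mn - a_i - Y open positions r.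
  Summing over them, the left side times mn - a_i - Y is at most the expected number of copies
  of i at open positions, which is at most m_i(h), since the copies revealed by correct guesses
  are not at open positions.
*)

lemma length_hist [simp]: "length (fst (hist G w k)) = k \<and> length (snd (hist G w k)) = k"
  by (induction k) (auto simp: Let_def split: prod.splits)

lemma nth_snd_hist: "r < k \<Longrightarrow> snd (hist G w k) ! r \<longleftrightarrow> w ! r = fst (hist G w k) ! r"
proof (induction k)
  case (Suc k)
  obtain gs ys where "hist G w k = (gs, ys)" by force
  with Suc length_hist[of G w k] show ?case
    by (auto simp: Let_def nth_append less_Suc_eq)
qed simp

lemma hist_cong:
  assumes "\<forall>r<k. w' ! r = fst (hist G w k) ! r \<longleftrightarrow> w ! r = fst (hist G w k) ! r"
  shows "hist G w' k = hist G w k"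
  using assms
proof (induction k)
  case (Suc k)
  obtain gs ys where h: "hist G w k = (gs, ys)" by force
  have "length gs = k" using length_hist[of G w k] h by simp
  have agree: "w' ! r = (gs @ [G (gs, ys)]) ! r \<longleftrightarrow> w ! r = (gs @ [G (gs, ys)]) ! r"
    if "r \<le> k" for r
    using Suc.prems h that by (simp add: Let_def le_imp_less_Suc)
  have "\<forall>r<k. w' ! r = gs ! r \<longleftrightarrow> w ! r = gs ! r"
    using agree \<open>length gs = k\<close> by (metis less_imp_le_nat nth_append)
  moreover have "w' ! k = G (gs, ys) \<longleftrightarrow> w ! k = G (gs, ys)"
    using agree[of k] \<open>length gs = k\<close> by auto
  ultimately show ?case using Suc.IH h by (simp add: Let_def)
qed simp

lemma hist_swap:
  assumes "r < length w" "s < length w"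
    and "r < s \<Longrightarrow> \<not> snd (hist G w s) ! r \<and> fst (hist G w s) ! r \<noteq> w ! s"
  shows "hist G (w[s := w ! r, r := w ! s]) s = hist G w s"
proof (rule hist_cong, intro allI impI)
  fix r' assume "r' < s"
  show "w[s := w ! r, r := w ! s] ! r' = fst (hist G w s) ! r' \<longleftrightarrow> w ! r' = fst (hist G w s) ! r'"
  proof (cases "r' = r")
    case True
    with assms \<open>r' < s\<close> nth_snd_hist[of r s G w] show ?thesis by auto
  next
    case False
    with \<open>r' < s\<close> show ?thesis by simp
  qed
qed

lemma count_list_eq_card_indices: "count_list xs x = card {r. r < length xs \<and> xs ! r = x}"
  by (simp add: count_list_eq_length_filter length_filter_conv_card eq_commute)

lemma length_decks: "w \<in> decks m n \<Longrightarrow> length w = m * n"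
  unfolding decks_def by simp

lemma finite_decks: "finite (decks m n)"
proof (rule finite_subset)
  show "decks m n \<subseteq> {w. set w \<subseteq> {1..n} \<and> length w = m * n}"
    unfolding decks_def by auto
qed (simp add: finite_lists_length_eq)

lemma decks_nonempty: "decks m n \<noteq> {}"
proof -
  define M where "M = (\<Sum>i\<in>{1..n}. replicate_mset m i)"
  obtain w where w: "mset w = M" using ex_mset by blast
  have count_M: "count M j = (if j \<in> {1..n} then m else 0)" for j
    unfolding M_def by (simp add: count_sum)
  have "length w = m * n"
    using w by (simp add: M_def flip: size_mset)
  moreover have "set w \<subseteq> {1..n}"
  proof
    fix x assume "x \<in> set w"
    then have "count M x \<noteq> 0" using w by (simp flip: set_mset_mset)
    then show "x \<in> {1..n}" using count_M[of x] by (simp split: if_splits)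
  qed
  moreover have "\<forall>i\<in>{1..n}. count_list w i = m"
    using w count_M by (simp flip: count_mset)
  ultimately show ?thesis unfolding decks_def by blast
qed

lemma mset_eq_decks: "w \<in> decks m n \<Longrightarrow> mset v = mset w \<Longrightarrow> v \<in> decks m n"
  unfolding decks_def by (simp flip: count_mset set_mset_mset size_mset)

lemma prob_deck_pmf:
  "measure_pmf.prob (deck_pmf m n) X = card (decks m n \<inter> X) / card (decks m n)"
  unfolding deck_pmf_def by (simp add: measure_pmf_of_set finite_decks decks_nonempty)

lemma prob_deck_pmf_ratio:
  "measure_pmf.prob (deck_pmf m n) X / measure_pmf.prob (deck_pmf m n) Y
     = card (decks m n \<inter> X) / card (decks m n \<inter> Y)"
  using finite_decks decks_nonempty by (simp add: prob_deck_pmf)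

definition consistent_decks :: "nat \<Rightarrow> nat \<Rightarrow> strategy \<Rightarrow> nat \<Rightarrow> history \<Rightarrow> nat list set" where
  "consistent_decks m n G s h = {w \<in> decks m n. hist G w s = h}"

definition open_positions :: "nat \<Rightarrow> history \<Rightarrow> nat \<Rightarrow> nat set" where
  "open_positions N h i = {r. r < N \<and> \<not> (r < length (fst h) \<and> (snd h ! r \<or> fst h ! r = i))}"

lemma card_open_positions_ge:
  assumes "length (snd h) = length (fst h)"
  shows "N - aguessed h i - Ycorrect h \<le> card (open_positions N h i)"
proof -
  let ?Y = "{r. r < length (fst h) \<and> snd h ! r}"
  let ?a = "{r. r < length (fst h) \<and> fst h ! r = i}"
  have "Ycorrect h = card ?Y"
    unfolding Ycorrect_def using assms by (simp add: length_filter_conv_card)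
  moreover have "aguessed h i = card ?a"
    unfolding aguessed_def by (rule count_list_eq_card_indices)
  moreover have "open_positions N h i = {..<N} - (?Y \<union> ?a)"
    unfolding open_positions_def by auto
  moreover have "card {..<N} - card (?Y \<union> ?a) \<le> card ({..<N} - (?Y \<union> ?a))"
    by (rule diff_card_le_card_Diff) simp
  moreover have "card (?Y \<union> ?a) \<le> card ?Y + card ?a" by (rule card_Un_le)
  ultimately show ?thesis by simp
qed

lemma card_consistent_decks_at_le:
  assumes "s < m * n" and r: "r \<in> open_positions (m * n) h i"
  shows "card {w \<in> consistent_decks m n G s h. w ! s = i}
           \<le> card {w \<in> consistent_decks m n G s h. w ! r = i}"
proof -
  define swap where "swap w = w[s := w ! r, r := w ! s]" for w :: "nat list"
  have "r < m * n" using r unfolding open_positions_def by simp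
  have swap_swap: "swap (swap w) = w" if "length w = m * n" for w
    using that \<open>r < m * n\<close> \<open>s < m * n\<close> unfolding swap_def
    by (cases "r = s") (auto intro!: nth_equalityI simp: nth_list_update)
  have "swap w \<in> {w \<in> consistent_decks m n G s h. w ! r = i}"
    if w: "w \<in> consistent_decks m n G s h" "w ! s = i" for w
  proof -
    have "w \<in> decks m n" and h: "hist G w s = h" using w unfolding consistent_decks_def by auto
    have "length w = m * n" using \<open>w \<in> decks m n\<close> by (rule length_decks)
    then have "hist G (swap w) s = h"
      using hist_swap[of r w s G] r w(2) h \<open>r < m * n\<close> \<open>s < m * n\<close>
      unfolding swap_def open_positions_def by auto
    moreover have "swap w \<in> decks m n"
      using \<open>w \<in> decks m n\<close> \<open>length w = m * n\<close> \<open>r < m * n\<close> \<open>s < m * n\<close>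
      unfolding swap_def by (auto intro: mset_eq_decks simp: mset_swap)
    moreover have "swap w ! r = i"
      using w(2) \<open>length w = m * n\<close> \<open>r < m * n\<close> \<open>s < m * n\<close> unfolding swap_def by simp
    ultimately show ?thesis unfolding consistent_decks_def by simp
  qed
  moreover have "inj_on swap {w \<in> consistent_decks m n G s h. w ! s = i}"
  proof (rule inj_on_inverseI[where g = swap])
    fix w assume "w \<in> {w \<in> consistent_decks m n G s h. w ! s = i}"
    then have "length w = m * n" unfolding consistent_decks_def by (simp add: length_decks)
    then show "swap (swap w) = w" by (rule swap_swap)
  qed
  moreover have "finite (consistent_decks m n G s h)"
    unfolding consistent_decks_def using finite_decks by simp
  ultimately show ?thesis by (intro card_inj_on_le) auto
qed

lemma card_open_positions_holding_le:
  assumes w: "w \<in> consistent_decks m n G s h" and "i \<in> {1..n}" "s \<le> m * n"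
  shows "card {r \<in> open_positions (m * n) h i. w ! r = i} \<le> mleft m h i"
proof -
  let ?open = "{r \<in> open_positions (m * n) h i. w ! r = i}"
  let ?revealed = "{r. r < s \<and> fst h ! r = i \<and> snd h ! r}"
  have h: "hist G w s = h" and "w \<in> decks m n" using w unfolding consistent_decks_def by auto
  then have "length w = m * n" by (simp add: length_decks)
  have "count_list w i = m"
    using \<open>w \<in> decks m n\<close> \<open>i \<in> {1..n}\<close> unfolding decks_def by blast
  have "length (fst h) = s" using h length_hist[of G w s] by simp
  have revealed: "w ! r = fst h ! r" if "r < s" "snd h ! r" for r
    using that h nth_snd_hist[of r s G w] by simp
  have "?open \<union> ?revealed \<subseteq> {r. r < length w \<and> w ! r = i}"
    using revealed \<open>length w = m * n\<close> \<open>s \<le> m * n\<close> unfolding open_positions_def by auto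
  then have "card (?open \<union> ?revealed) \<le> m"
    using \<open>count_list w i = m\<close> card_mono[of "{r. r < length w \<and> w ! r = i}"]
    by (simp add: count_list_eq_card_indices)
  moreover have "?open \<inter> ?revealed = {}"
    using \<open>length (fst h) = s\<close> unfolding open_positions_def by auto
  moreover have "finite ?open" "finite ?revealed" unfolding open_positions_def by auto
  ultimately have "card ?open + card ?revealed \<le> m"
    by (simp add: card_Un_disjoint)
  moreover have "mleft m h i = m - card ?revealed"
    unfolding mleft_def using \<open>length (fst h) = s\<close> by simp
  ultimately show ?thesis by simp
qed

lemma sum_card_filter_swap:
  assumes "finite A" "finite B"
  shows "(\<Sum>x\<in>A. card {y \<in> B. P x y}) = (\<Sum>y\<in>B. card {x \<in> A. P x y})"
proof -
  have "card {y \<in> B. P x y} = (\<Sum>y\<in>B. of_bool (P x y))" for x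
    using assms(2) by (simp add: Int_def)
  then have "(\<Sum>x\<in>A. card {y \<in> B. P x y}) = (\<Sum>x\<in>A. \<Sum>y\<in>B. of_bool (P x y))"
    by simp
  also have "\<dots> = (\<Sum>y\<in>B. \<Sum>x\<in>A. of_bool (P x y))" by (rule sum.swap)
  also have "\<dots> = (\<Sum>y\<in>B. card {x \<in> A. P x y})"
    using assms(1) by (simp add: Int_def)
  finally show ?thesis .
qed

lemma card_consistent_decks_at_bound:
  assumes "i \<in> {1..n}" "s < m * n"
  shows "card {w \<in> consistent_decks m n G s h. w ! s = i} * (m * n - aguessed h i - Ycorrect h)
           \<le> card (consistent_decks m n G s h) * mleft m h i"
proof (cases "consistent_decks m n G s h = {}")
  case False
  let ?S = "consistent_decks m n G s h"
  let ?F = "open_positions (m * n) h i"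
  obtain w where "hist G w s = h" using False unfolding consistent_decks_def by blast
  then have "length (snd h) = length (fst h)" using length_hist[of G w s] by auto
  have "finite ?S" unfolding consistent_decks_def using finite_decks by simp
  have "finite ?F" unfolding open_positions_def by simp
  have "card {w \<in> ?S. w ! s = i} * (m * n - aguessed h i - Ycorrect h)
          \<le> card {w \<in> ?S. w ! s = i} * card ?F"
    using card_open_positions_ge[OF \<open>length (snd h) = length (fst h)\<close>] by simp
  also have "\<dots> = (\<Sum>r\<in>?F. card {w \<in> ?S. w ! s = i})" by simp
  also have "\<dots> \<le> (\<Sum>r\<in>?F. card {w \<in> ?S. w ! r = i})"
    using card_consistent_decks_at_le[OF \<open>s < m * n\<close>] by (rule sum_mono)
  also have "\<dots> = (\<Sum>w\<in>?S. card {r \<in> ?F. w ! r = i})"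
    using \<open>finite ?F\<close> \<open>finite ?S\<close> by (rule sum_card_filter_swap)
  also have "\<dots> \<le> (\<Sum>w\<in>?S. mleft m h i)"
    using card_open_positions_holding_le assms by (intro sum_mono) auto
  finally show ?thesis by simp
qed simp

theorem lemma3p1:
  fixes m n t i :: nat and G :: strategy and h :: history
  assumes G_range: "\<forall>hh. G hh \<in> {1..n}"
    and t_range: "1 \<le> t" "t \<le> m * n"
    and i_range: "i \<in> {1..n}"
    and h_pos: "measure_pmf.prob (deck_pmf m n) {w. hist G w (t - 1) = h} > 0"
    and denom_pos: "aguessed h i + Ycorrect h < m * n"
  shows "measure_pmf.prob (deck_pmf m n) {w. hist G w (t - 1) = h \<and> w ! (t - 1) = i}
           / measure_pmf.prob (deck_pmf m n) {w. hist G w (t - 1) = h}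
         \<le> real (mleft m h i) / (real (m * n) - real (aguessed h i) - real (Ycorrect h))"
proof -
  let ?S = "consistent_decks m n G (t - 1) h"
  let ?A = "{w \<in> ?S. w ! (t - 1) = i}"
  let ?denom = "real (m * n) - real (aguessed h i) - real (Ycorrect h)"
  have S: "decks m n \<inter> {w. hist G w (t - 1) = h} = ?S"
    and A: "decks m n \<inter> {w. hist G w (t - 1) = h \<and> w ! (t - 1) = i} = ?A"
    unfolding consistent_decks_def by blast+
  have "card ?S \<noteq> 0" using h_pos unfolding prob_deck_pmf S by (intro notI) simp
  have "card ?A * (m * n - aguessed h i - Ycorrect h) \<le> card ?S * mleft m h i"
    using card_consistent_decks_at_bound i_range t_range by simp
  then have "real (card ?A * (m * n - aguessed h i - Ycorrect h)) \<le> real (card ?S * mleft m h i)"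
    by (rule of_nat_mono)
  moreover have "real (m * n - aguessed h i - Ycorrect h) = ?denom"
    using denom_pos by linarith
  ultimately have "real (card ?A) * ?denom \<le> real (mleft m h i) * real (card ?S)"
    by (simp only: of_nat_mult mult.commute)
  moreover have "?denom > 0" using denom_pos by linarith
  ultimately show ?thesis
    unfolding prob_deck_pmf_ratio S A using \<open>card ?S \<noteq> 0\<close> by (simp add: divide_simps)
qed

end
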